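(* Let $n,N\in\mathbb{N}$, $m\in\mathbb{R}$, $\rho\in(0,1]$, and let $a\in L^\infty S^m_\rho(n,N)$. Let $Z=(z_1,\dots,z_N)\in\mathbb{R}^{nN}$ with $z_j\in\mathbb{R}^n$ be such that the set $S:=\{j\in\{1,\dots,N\} : |z_j|\ge 1\}$ is nonempty. Then for every choice of numbers $N_j\ge 0$ ($j\in S$) there is a constant $C$, independent of $x$ and $Z$, such that \[ \Big|\int_{\mathbb{R}^{nN}} a(x,\Xi)\, e^{i\langle Z,\Xi\rangle}\, d\Xi\Big| \le C \prod_{j\in S}|z_j|^{-N_j}\quad\text{for all } x\in\mathbb{R}^n. \]
   Context: For $\Xi=(\xi_1,\dots,\xi_N)\in\mathbb{R}^{nN}$ with $\xi_j\in\mathbb{R}^n$, $|\Xi|^2=\sum_j|\xi_j|^2$, $\langle\Xi\rangle=(1+|\Xi|^2)^{1/2}$, and $\langle Z,\Xi\rangle=\sum_{j=1}^N z_j\cdot\xi_j$. A function $a:\mathbb{R}^n\times\mathbb{R}^{nN}\to\mathbb{C}$ belongs to $L^\infty S^m_\rho(n,N)$ if for every multi-index $\alpha\in\mathbb{Z}_+^{nN}$ there is $C_\alpha$ with $\operatorname{ess\,sup}_x|\partial_\Xi^\alpha a(x,\Xi)|\le C_\alpha\langle\Xi\rangle^{m-\rho|\alpha|}$ for all $\Xi$. The integral is understood as an oscillatory integral (e.g. as the sum of the integrals of $a\varphi_k$ over a smooth dyadic Littlewood–Paley partition of unity $\{\varphi_k\}_{k\ge0}$ of $\mathbb{R}^{nN}$).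 *)

theory Defs
  imports "HOL-Analysis.Analysis"
begin

definition pdiff :: "'a::euclidean_space \<Rightarrow> ('a \<Rightarrow> 'b::real_normed_vector) \<Rightarrow> 'a \<Rightarrow> 'b" where
  "pdiff e f p = vector_derivative (\<lambda>t::real. f (p + t *\<^sub>R e)) (at 0)"

text \<open>Iterated partial derivative; a list es of basis vectors encodes a multi-index
  (the multi-index alpha has alpha_e = number of occurrences of e, and length es = |alpha|).\<close>
fun iter_pdiff :: "'a::euclidean_space list \<Rightarrow> ('a \<Rightarrow> 'b::real_normed_vector) \<Rightarrow> 'a \<Rightarrow> 'b" where
  "iter_pdiff [] f = f"
| "iter_pdiff (e # es) f = pdiff e (iter_pdiff es f)"

definition smooth_fun :: "('a::euclidean_space \<Rightarrow> 'b::real_normed_vector) \<Rightarrow> bool" where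
  "smooth_fun f \<longleftrightarrow> (\<forall>es. set es \<subseteq> Basis \<longrightarrow> (\<forall>p. iter_pdiff es f differentiable (at p)))"

definition jbr :: "'a::real_normed_vector \<Rightarrow> real" where
  "jbr v = sqrt (1 + (norm v)\<^sup>2)"

text \<open>The symbol class L^infty S^m_rho(n,N): x ranges over R^n (type real^'n),
  Xi = (xi_1,...,xi_N) ranges over R^{nN} (type real^'n^'N, with xi_j = Xi $ j).
  a(x,.) is smooth in Xi, and for every multi-index the derivative bound holds
  with ess sup over x (w.r.t. Lebesgue measure).\<close>
definition LinfS :: "real \<Rightarrow> real \<Rightarrow> (real^'n \<Rightarrow> real^'n^'N \<Rightarrow> complex) \<Rightarrow> bool" where
  "LinfS m \<rho> a \<longleftrightarrow>
     (\<forall>x. smooth_fun (a x)) \<and>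
     (\<forall>es. set es \<subseteq> Basis \<longrightarrow>
        (\<exists>C. \<forall>\<Xi>. AE x in lborel. norm (iter_pdiff es (a x) \<Xi>) \<le> C * jbr \<Xi> powr (m - \<rho> * real (length es))))"

definition lp_partition :: "(nat \<Rightarrow> 'a::euclidean_space \<Rightarrow> real) \<Rightarrow> bool" where
  "lp_partition \<phi> \<longleftrightarrow> (\<exists>\<psi>::'a \<Rightarrow> real. smooth_fun \<psi> \<and>
      (\<forall>v. 0 \<le> \<psi> v \<and> \<psi> v \<le> 1) \<and>
      (\<forall>v. norm v \<le> 1 \<longrightarrow> \<psi> v = 1) \<and> (\<forall>v. norm v \<ge> 2 \<longrightarrow> \<psi> v = 0) \<and>
      \<phi> 0 = \<psi> \<and>
      (\<forall>k v. \<phi> (Suc k) v = \<psi> ((1 / 2 ^ Suc k) *\<^sub>R v) - \<psi> ((1 / 2 ^ k) *\<^sub>R v)))"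

text \<open>The oscillatory integral  int a(x,Xi) e^{i<Z,Xi>} dXi, as the sum of the integrals of
  a phi_k e^{i<Z,Xi>} over the partition. Here inner Z Xi = sum_j z_j . xi_j.\<close>
definition osc_int :: "(nat \<Rightarrow> 'a::euclidean_space \<Rightarrow> real) \<Rightarrow> ('a \<Rightarrow> complex) \<Rightarrow> 'a \<Rightarrow> complex" where
  "osc_int \<phi> f Z = (\<Sum>k. integral\<^sup>L lborel (\<lambda>\<Xi>. f \<Xi> * of_real (\<phi> k \<Xi>) * cis (inner Z \<Xi>)))"

end

theory Submission
  imports Defs
begin

text \<open>Pick a basis direction \<open>e\<close> maximising \<open>|\<langle>Z, e\<rangle>|\<close> and \<open>h = t e\<close> with
  \<open>\<langle>Z, h\<rangle> = \<pi>\<close>, so that \<open>|t| \<le> \<pi> nN / |Z|\<close>. Translation by \<open>h\<close> flips the sign of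
  \<open>e\<^bsup>i\<langle>Z,\<Xi>\<rangle>\<^esup>\<close>, so the \<open>M\<close>-fold backward difference \<open>\<Delta>\<^sub>h\<^sup>M\<close> multiplies the integral of each
  dyadic piece \<open>a \<phi>\<^sub>k e\<^bsup>i\<langle>Z,\<Xi>\<rangle>\<^esup>\<close> by \<open>2\<^sup>M\<close>. On the other hand \<open>\<Delta>\<^sub>h\<^sup>M (a \<phi>\<^sub>k)\<close> is at most
  \<open>|t|\<^sup>M\<close> times the \<open>M\<close>-th derivative of \<open>a \<phi>\<^sub>k\<close> along \<open>e\<close>, which by the Leibniz rule and the
  symbol estimates is \<open>O(2\<^bsup>k(m - \<rho>M)\<^esup>)\<close> on a ball of volume \<open>O(2\<^bsup>k nN\<^esup>)\<close>. For \<open>\<rho>M > m + nN\<close>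
  the pieces sum geometrically to \<open>O(|Z|\<^bsup>-M\<^esup>)\<close>, and \<open>|Z|\<^bsup>-M\<^esup> \<le> \<Prod>\<^sub>j\<^sub>\<in>\<^sub>S |z\<^sub>j|\<^bsup>-N\<^sub>j\<^esup>\<close> once
  \<open>M \<ge> \<Sum> N\<^sub>j\<close>.\<close>

section \<open>Finite differences\<close>

fun fdiff :: "nat \<Rightarrow> 'a::real_vector \<Rightarrow> ('a \<Rightarrow> 'b::real_vector) \<Rightarrow> 'a \<Rightarrow> 'b" where
  "fdiff 0 h f = f"
| "fdiff (Suc M) h f = (\<lambda>y. fdiff M h f y - fdiff M h f (y - h))"

lemma fdiff_along_line:
  fixes e p :: "'a::real_vector"
  shows "fdiff M (t *\<^sub>R e) f (p + s *\<^sub>R e) = fdiff M t (\<lambda>s. f (p + s *\<^sub>R e)) s"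
proof (induction M arbitrary: s)
  case 0
  then show ?case by simp
next
  case (Suc M)
  have "p + s *\<^sub>R e - t *\<^sub>R e = p + (s - t) *\<^sub>R e"
    by (simp add: algebra_simps)
  then show ?case
    by (simp only: fdiff.simps Suc.IH)
qed

definition deriv_seq :: "(nat \<Rightarrow> real \<Rightarrow> 'a::real_normed_vector) \<Rightarrow> bool" where
  "deriv_seq D \<longleftrightarrow> (\<forall>i s. (D i has_vector_derivative D (Suc i) s) (at s))"

lemma deriv_seq_fdiff:
  assumes "deriv_seq D"
  shows "deriv_seq (\<lambda>i. fdiff M t (D i))"
  unfolding deriv_seq_def
proof (induction M)
  case 0
  then show ?case using assms by (simp add: deriv_seq_def)
next
  case (Suc M)
  have shift: "((\<lambda>s. s - t) has_vector_derivative 1) (at s)" for s :: real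
    by (auto intro!: derivative_eq_intros simp: has_real_derivative_iff_has_vector_derivative[symmetric])
  have "((\<lambda>s. fdiff M t (D i) (s - t)) has_vector_derivative fdiff M t (D (Suc i)) (s - t)) (at s)"
    for i s
    using vector_diff_chain_at[OF shift, of "fdiff M t (D i)"] Suc.IH by (simp add: o_def)
  then show ?case
    using Suc.IH by (auto intro!: derivative_eq_intros)
qed

lemma norm_fdiff_le:
  assumes D: "deriv_seq D"
    and "\<forall>\<sigma>\<in>{0..real M}. norm (D (i + M) (x - \<sigma> * t)) \<le> B"
  shows "norm (fdiff M t (D i) x) \<le> \<bar>t\<bar> ^ M * B"
  using assms(2)
proof (induction M arbitrary: i x)
  case 0
  then show ?case by (auto dest: bspec[of _ _ 0])
next
  case (Suc M)
  let ?G = "fdiff M t (D i)" and ?G' = "fdiff M t (D (Suc i))"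
  have G': "norm (?G' (x - \<tau> * t)) \<le> \<bar>t\<bar> ^ M * B" if "\<tau> \<in> {0..1}" for \<tau>
  proof (rule Suc.IH, intro ballI)
    fix \<sigma> assume "\<sigma> \<in> {0..real M}"
    then have "\<tau> + \<sigma> \<in> {0..real (Suc M)}" using that by auto
    then have "norm (D (i + Suc M) (x - (\<tau> + \<sigma>) * t)) \<le> B" using Suc.prems by blast
    then show "norm (D (Suc i + M) (x - \<tau> * t - \<sigma> * t)) \<le> B"
      by (simp add: algebra_simps)
  qed
  have segment: "\<exists>\<tau>\<in>{0..1}. y = x - \<tau> * t" if y: "y \<in> closed_segment (x - t) x" for y
  proof -
    obtain u where "0 \<le> u" "u \<le> 1" "y = (1 - u) *\<^sub>R (x - t) + u *\<^sub>R x"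
      using y unfolding closed_segment_def by auto
    then show ?thesis by (intro bexI[of _ "1 - u"]) (auto simp: algebra_simps)
  qed
  have "norm (?G x - ?G (x - t)) \<le> (\<bar>t\<bar> ^ M * B) * norm (x - (x - t))"
  proof (rule differentiable_bound[of "closed_segment (x - t) x" ?G "\<lambda>y d. d *\<^sub>R ?G' y"])
    show "(?G has_derivative (\<lambda>d. d *\<^sub>R ?G' y)) (at y within closed_segment (x - t) x)" for y
      using deriv_seq_fdiff[OF D, of M t] unfolding deriv_seq_def has_vector_derivative_def
      by (blast intro: has_derivative_at_withinI)
    show "onorm (\<lambda>d. d *\<^sub>R ?G' y) \<le> \<bar>t\<bar> ^ M * B" if "y \<in> closed_segment (x - t) x" for y
    proof (rule onorm_le)
      fix d :: real
      have "norm (?G' y) \<le> \<bar>t\<bar> ^ M * B" using segment[OF that] G' by blast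
      then show "norm (d *\<^sub>R ?G' y) \<le> \<bar>t\<bar> ^ M * B * norm d"
        by (simp add: mult.commute mult_left_mono)
    qed
  qed auto
  then show ?case by (simp add: mult.commute mult.left_commute)
qed

lemma lborel_integral_translate:
  fixes H :: "'a::euclidean_space \<Rightarrow> 'b::{banach, second_countable_topology}"
  assumes "integrable lborel H"
  shows "integrable lborel (\<lambda>x. H (x - h))" "(\<integral>x. H (x - h) \<partial>lborel) = integral\<^sup>L lborel H"
proof -
  have [measurable]: "H \<in> borel_measurable borel"
    using assms by simp
  have shift: "(+) (- h) \<in> measurable lborel borel"
    by simp
  have eq: "(\<lambda>x. H (- h + x)) = (\<lambda>x. H (x - h))"
    by (simp add: algebra_simps)
  show "integrable lborel (\<lambda>x. H (x - h))"
    using assms integrable_distr_eq[OF shift, of H] lborel_distr_plus[of "- h"] eq by simp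
  show "(\<integral>x. H (x - h) \<partial>lborel) = integral\<^sup>L lborel H"
    using integral_distr[OF shift, of H] lborel_distr_plus[of "- h"] eq by simp
qed

lemma integral_fdiff_cis:
  fixes g :: "'a::euclidean_space \<Rightarrow> complex"
  assumes int: "integrable lborel (\<lambda>x. g x * cis (inner Z x))" and half_period: "inner Z h = pi"
  shows "integrable lborel (\<lambda>x. fdiff M h g x * cis (inner Z x)) \<and>
    (\<integral>x. fdiff M h g x * cis (inner Z x) \<partial>lborel) = 2 ^ M * (\<integral>x. g x * cis (inner Z x) \<partial>lborel)"
proof (induction M)
  case 0
  then show ?case using int by simp
next
  case (Suc M)
  let ?H = "\<lambda>x. fdiff M h g x * cis (inner Z x)"
  have int_H: "integrable lborel ?H" using Suc by blast
  have "cis (inner Z (x - h)) = cis (inner Z x) / cis pi" for x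
    using cis_divide[of "inner Z x" pi] by (simp add: inner_diff_right half_period)
  then have "fdiff M h g (x - h) * cis (inner Z x) = - ?H (x - h)" for x
    by simp
  then have shifted: "(\<lambda>x. fdiff M h g (x - h) * cis (inner Z x)) = (\<lambda>x. - ?H (x - h))"
    by (rule ext)
  have int_shifted: "integrable lborel (\<lambda>x. fdiff M h g (x - h) * cis (inner Z x))"
    and integral_shifted: "(\<integral>x. fdiff M h g (x - h) * cis (inner Z x) \<partial>lborel) = - integral\<^sup>L lborel ?H"
    unfolding shifted using lborel_integral_translate[OF int_H, of h] by simp_all
  have "(\<lambda>x. fdiff (Suc M) h g x * cis (inner Z x)) = (\<lambda>x. ?H x - fdiff M h g (x - h) * cis (inner Z x))"
    by (simp add: algebra_simps)
  then show ?case
    using Suc int_H int_shifted integral_shifted by simp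
qed

section \<open>Derivatives along lines\<close>

lemma sum_binomial_Suc:
  fixes A F :: "nat \<Rightarrow> complex"
  shows "(\<Sum>j\<le>i. of_nat (i choose j) * (A j * F (Suc (i - j)) + A (Suc j) * F (i - j)))
       = (\<Sum>j\<le>Suc i. of_nat (Suc i choose j) * A j * F (Suc i - j))"
proof -
  have R: "(\<Sum>j\<le>Suc i. of_nat (Suc i choose j) * A j * F (Suc i - j))
     = A 0 * F (Suc i) + (\<Sum>j\<le>i. of_nat (i choose j) * A (Suc j) * F (i - j))
        + (\<Sum>j\<le>i. of_nat (i choose Suc j) * A (Suc j) * F (i - j))"
    by (subst sum.atMost_Suc_shift) (simp add: distrib_right sum.distrib del: sum.atMost_Suc)
  have "A 0 * F (Suc i) + (\<Sum>j\<le>i. of_nat (i choose Suc j) * A (Suc j) * F (i - j))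
      = (\<Sum>j\<le>Suc i. of_nat (i choose j) * A j * F (Suc i - j))"
    by (subst sum.atMost_Suc_shift) (simp del: sum.atMost_Suc)
  also have "\<dots> = (\<Sum>j\<le>i. of_nat (i choose j) * A j * F (Suc (i - j)))"
    by (simp add: Suc_diff_le)
  finally have L: "A 0 * F (Suc i) + (\<Sum>j\<le>i. of_nat (i choose Suc j) * A (Suc j) * F (i - j))
      = (\<Sum>j\<le>i. of_nat (i choose j) * A j * F (Suc (i - j)))" .
  have "(\<Sum>j\<le>i. of_nat (i choose j) * (A j * F (Suc (i - j)) + A (Suc j) * F (i - j)))
     = (\<Sum>j\<le>i. of_nat (i choose j) * A j * F (Suc (i - j)))
       + (\<Sum>j\<le>i. of_nat (i choose j) * A (Suc j) * F (i - j))"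
    by (simp add: distrib_left sum.distrib mult.assoc)
  then show ?thesis
    unfolding R L[symmetric] by (simp add: algebra_simps)
qed

lemma deriv_seq_leibniz:
  fixes A F :: "nat \<Rightarrow> real \<Rightarrow> complex"
  assumes "deriv_seq A" and "deriv_seq F"
  shows "deriv_seq (\<lambda>i s. \<Sum>j\<le>i. of_nat (i choose j) * A j s * F (i - j) s)"
  unfolding deriv_seq_def
proof (intro allI)
  fix i s
  have "((\<lambda>s. of_nat (i choose j) * A j s * F (i - j) s) has_vector_derivative
      of_nat (i choose j) * (A j s * F (Suc (i - j)) s + A (Suc j) s * F (i - j) s)) (at s)" for j
  proof -
    have "((\<lambda>s. A j s * F (i - j) s) has_vector_derivative
        A j s * F (Suc (i - j)) s + A (Suc j) s * F (i - j) s) (at s)"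
      using assms has_vector_derivative_mult unfolding deriv_seq_def by fastforce
    from has_vector_derivative_mult_right[OF this, of "of_nat (i choose j)"]
    show ?thesis by (simp add: mult.assoc)
  qed
  then have "((\<lambda>s. \<Sum>j\<le>i. of_nat (i choose j) * A j s * F (i - j) s) has_vector_derivative
      (\<Sum>j\<le>i. of_nat (i choose j) * (A j s * F (Suc (i - j)) s + A (Suc j) s * F (i - j) s))) (at s)"
    by (rule has_vector_derivative_sum)
  then show "((\<lambda>s. \<Sum>j\<le>i. of_nat (i choose j) * A j s * F (i - j) s) has_vector_derivative
      (\<Sum>j\<le>Suc i. of_nat (Suc i choose j) * A j s * F (Suc i - j) s)) (at s)"
    using sum_binomial_Suc[of i "\<lambda>j. A j s" "\<lambda>j. F j s"] by simp
qed

abbreviation pdiff_pow :: "'a::euclidean_space \<Rightarrow> nat \<Rightarrow> ('a \<Rightarrow> 'b::real_normed_vector) \<Rightarrow> 'a \<Rightarrow> 'b" where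
  "pdiff_pow e j f \<equiv> iter_pdiff (replicate j e) f"

lemma has_vector_derivative_along_line:
  fixes g :: "'a::real_normed_vector \<Rightarrow> 'b::real_normed_vector"
  assumes "(g has_derivative g') (at (p + s *\<^sub>R e))"
  shows "((\<lambda>s. g (p + s *\<^sub>R e)) has_vector_derivative g' e) (at s)"
proof -
  have "((\<lambda>s. p + s *\<^sub>R e) has_derivative (\<lambda>d. d *\<^sub>R e)) (at s)"
    by (auto intro!: derivative_eq_intros)
  from has_derivative_compose[OF this assms]
  have "((\<lambda>s. g (p + s *\<^sub>R e)) has_derivative (\<lambda>d. g' (d *\<^sub>R e))) (at s)"
    by (simp add: o_def)
  moreover have "(\<lambda>d. g' (d *\<^sub>R e)) = (\<lambda>d. d *\<^sub>R g' e)"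
    using has_derivative_linear[OF assms] by (simp add: linear_scale)
  ultimately show ?thesis
    unfolding has_vector_derivative_def by simp
qed

lemma pdiff_eq_derivative:
  fixes g :: "'a::euclidean_space \<Rightarrow> 'b::real_normed_vector"
  assumes "(g has_derivative g') (at q)"
  shows "pdiff e g q = g' e"
  unfolding pdiff_def using assms
  by (intro vector_derivative_at has_vector_derivative_along_line) simp

lemma has_vector_derivative_scaled_line:
  fixes g :: "'a::euclidean_space \<Rightarrow> 'b::real_normed_vector"
  assumes "\<And>q. g differentiable (at q)"
  shows "((\<lambda>s. g (c *\<^sub>R (p + s *\<^sub>R e))) has_vector_derivative c *\<^sub>R pdiff e g (c *\<^sub>R (p + s *\<^sub>R e))) (at s)"
proof -
  have line: "c *\<^sub>R (p + s *\<^sub>R e) = c *\<^sub>R p + s *\<^sub>R (c *\<^sub>R e)" for s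
    by (simp add: algebra_simps)
  obtain g' where g': "(g has_derivative g') (at (c *\<^sub>R p + s *\<^sub>R (c *\<^sub>R e)))"
    using assms unfolding differentiable_def by blast
  have "g' (c *\<^sub>R e) = c *\<^sub>R g' e"
    using has_derivative_linear[OF g'] by (simp add: linear_scale)
  then show ?thesis
    unfolding line using has_vector_derivative_along_line[OF g'] pdiff_eq_derivative[OF g', of e]
    by simp
qed

lemma smooth_fun_pdiff_pow_differentiable:
  assumes "smooth_fun f" "e \<in> Basis"
  shows "pdiff_pow e j f differentiable (at q)"
  using assms unfolding smooth_fun_def by (metis in_set_replicate subsetI)

lemma smooth_fun_pdiff_pow_continuous:
  assumes "smooth_fun f" "e \<in> Basis"
  shows "continuous_on UNIV (pdiff_pow e j f)"
  using smooth_fun_pdiff_pow_differentiable[OF assms]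
  by (metis continuous_at_imp_continuous_on differentiable_imp_continuous_within)

lemma smooth_fun_continuous:
  assumes "smooth_fun f"
  shows "continuous_on UNIV f"
proof -
  have "f differentiable (at q)" for q
    using assms unfolding smooth_fun_def by (metis empty_subsetI empty_set iter_pdiff.simps(1))
  then show ?thesis
    by (metis continuous_at_imp_continuous_on differentiable_imp_continuous_within)
qed

lemma has_vector_derivative_pdiff_pow_scaled:
  assumes "smooth_fun f" "e \<in> Basis"
  shows "((\<lambda>s. pdiff_pow e j f (c *\<^sub>R (p + s *\<^sub>R e))) has_vector_derivative
          c *\<^sub>R pdiff_pow e (Suc j) f (c *\<^sub>R (p + s *\<^sub>R e))) (at s)"
  using has_vector_derivative_scaled_line[OF smooth_fun_pdiff_pow_differentiable[OF assms]] by simp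

lemma has_vector_derivative_pdiff_pow:
  assumes "smooth_fun f" "e \<in> Basis"
  shows "((\<lambda>s. pdiff_pow e j f (p + s *\<^sub>R e)) has_vector_derivative
          pdiff_pow e (Suc j) f (p + s *\<^sub>R e)) (at s)"
  using has_vector_derivative_pdiff_pow_scaled[OF assms, of j 1] by simp

lemma pdiff_locally_const:
  fixes f :: "'a::euclidean_space \<Rightarrow> 'b::real_normed_vector"
  assumes "open U" "v \<in> U" "\<And>w. w \<in> U \<Longrightarrow> f w = c"
  shows "pdiff e f v = 0"
proof -
  have "((\<lambda>t. c) has_vector_derivative 0) (at (0::real))"
    by simp
  moreover have "open {t::real. v + t *\<^sub>R e \<in> U}"
    by (rule open_vimage[OF assms(1), of "\<lambda>t. v + t *\<^sub>R e", simplified vimage_def])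
      (auto intro!: continuous_intros)
  ultimately have "((\<lambda>t. f (v + t *\<^sub>R e)) has_vector_derivative 0) (at 0)"
    by (rule has_vector_derivative_transform_within_open) (use assms in auto)
  then show ?thesis
    unfolding pdiff_def by (rule vector_derivative_at)
qed

lemma pdiff_pow_locally_const:
  fixes f :: "'a::euclidean_space \<Rightarrow> 'b::real_normed_vector"
  assumes "open U" "v \<in> U" "\<And>w. w \<in> U \<Longrightarrow> f w = c"
  shows "pdiff_pow e (Suc j) f v = 0"
  using assms(2)
proof (induction j arbitrary: v)
  case 0
  then show ?case using pdiff_locally_const[OF assms(1) _ assms(3)] by simp
next
  case (Suc j)
  then show ?case using pdiff_locally_const[OF assms(1) Suc.prems, of "pdiff_pow e (Suc j) f" 0] by simp
qed

section \<open>The dyadic pieces\<close>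

lemma jbr_ge_norm: "norm v \<le> jbr v"
  unfolding jbr_def by (rule real_le_rsqrt) simp

lemma jbr_ge_1: "1 \<le> jbr v"
  unfolding jbr_def by simp

lemma jbr_le_1_plus_norm: "jbr v \<le> 1 + norm v"
  unfolding jbr_def by (rule real_le_lsqrt) (auto simp: power2_eq_square algebra_simps)

lemma continuous_on_jbr: "continuous_on UNIV (jbr :: 'a::real_normed_vector \<Rightarrow> real)"
  unfolding jbr_def[abs_def] by (intro continuous_intros)

locale dyadic_partition =
  fixes \<psi> :: "'a::euclidean_space \<Rightarrow> real" and \<phi> :: "nat \<Rightarrow> 'a \<Rightarrow> real"
  assumes smooth: "smooth_fun \<psi>"
    and cutoff_one: "\<And>v. norm v \<le> 1 \<Longrightarrow> \<psi> v = 1"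
    and cutoff_zero: "\<And>v. 2 \<le> norm v \<Longrightarrow> \<psi> v = 0"
    and phi_0: "\<phi> 0 = \<psi>"
    and phi_Suc: "\<And>k v. \<phi> (Suc k) v = \<psi> ((1 / 2 ^ Suc k) *\<^sub>R v) - \<psi> ((1 / 2 ^ k) *\<^sub>R v)"

lemma lp_partition_imp_dyadic_partition:
  assumes "lp_partition \<phi>"
  obtains \<psi> where "dyadic_partition \<psi> \<phi>"
  using assms unfolding lp_partition_def dyadic_partition_def by blast

context dyadic_partition
begin

lemma pdiff_pow_cutoff_outer:
  assumes "2 < norm v"
  shows "pdiff_pow e j \<psi> v = 0"
proof (cases j)
  case 0
  then show ?thesis using assms cutoff_zero by simp
next
  case (Suc j')
  have "open {v::'a. 2 < norm v}"
    by (rule open_Collect_less) (auto intro!: continuous_intros)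
  then show ?thesis
    unfolding Suc by (rule pdiff_pow_locally_const[where c = 0]) (use assms cutoff_zero in auto)
qed

lemma pdiff_pow_cutoff_inner:
  assumes "norm v < 1"
  shows "pdiff_pow e j \<psi> v = (if j = 0 then 1 else 0)"
proof (cases j)
  case 0
  then show ?thesis using assms cutoff_one by simp
next
  case (Suc j')
  have "open {v::'a. norm v < 1}"
    by (rule open_Collect_less) (auto intro!: continuous_intros)
  then have "pdiff_pow e (Suc j') \<psi> v = 0"
    by (rule pdiff_pow_locally_const[where c = 1]) (use assms cutoff_one in auto)
  then show ?thesis
    using Suc by simp
qed

lemma pdiff_pow_cutoff_bounded:
  assumes "e \<in> Basis"
  obtains K where "\<And>v. \<bar>pdiff_pow e j \<psi> v\<bar> \<le> K"
proof -
  have "compact (pdiff_pow e j \<psi> ` cball 0 2)"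
    using continuous_on_subset[OF smooth_fun_pdiff_pow_continuous[OF smooth assms, of j]]
    by (intro compact_continuous_image) auto
  from compact_imp_bounded[OF this]
  obtain K where K: "\<And>y. y \<in> pdiff_pow e j \<psi> ` cball 0 2 \<Longrightarrow> norm y \<le> K"
    unfolding bounded_iff by blast
  have "pdiff_pow e j \<psi> 0 \<in> pdiff_pow e j \<psi> ` cball 0 2"
    by simp
  from K[OF this] have K0: "0 \<le> K"
    by (meson norm_ge_zero order_trans)
  have "\<bar>pdiff_pow e j \<psi> v\<bar> \<le> K" for v
  proof (cases "norm v \<le> 2")
    case True
    then show ?thesis using K[of "pdiff_pow e j \<psi> v"] by simp
  next
    case False
    then show ?thesis using pdiff_pow_cutoff_outer[of v] K0 by simp
  qed
  then show ?thesis by (rule that)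
qed

definition cutoff_dilate_deriv :: "'a \<Rightarrow> real \<Rightarrow> nat \<Rightarrow> 'a \<Rightarrow> real" where
  "cutoff_dilate_deriv e c j v = c ^ j * pdiff_pow e j \<psi> (c *\<^sub>R v)"

lemma has_vector_derivative_cutoff_dilate_deriv:
  assumes "e \<in> Basis"
  shows "((\<lambda>s. cutoff_dilate_deriv e c j (p + s *\<^sub>R e)) has_vector_derivative
    cutoff_dilate_deriv e c (Suc j) (p + s *\<^sub>R e)) (at s)"
  unfolding cutoff_dilate_deriv_def
  using has_vector_derivative_mult_right[OF has_vector_derivative_pdiff_pow_scaled[OF smooth assms], of "c ^ j"]
  by (simp add: mult.assoc mult.left_commute)

lemma cutoff_dilate_deriv_inner:
  assumes "0 < c" "c * norm v < 1"
  shows "cutoff_dilate_deriv e c j v = (if j = 0 then 1 else 0)"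
  using assms pdiff_pow_cutoff_inner[of "c *\<^sub>R v"] by (simp add: cutoff_dilate_deriv_def)

lemma cutoff_dilate_deriv_outer:
  assumes "0 < c" "2 < c * norm v"
  shows "cutoff_dilate_deriv e c j v = 0"
  using assms pdiff_pow_cutoff_outer[of "c *\<^sub>R v"] by (simp add: cutoff_dilate_deriv_def)

text \<open>The \<open>j\<close>-th derivative along \<open>e\<close> of \<open>\<phi> n\<close>, computed from
  \<open>\<phi> (Suc k) v = \<psi> (2\<^bsup>-k-1\<^esup> v) - \<psi> (2\<^bsup>-k\<^esup> v)\<close>.\<close>

fun piece_deriv :: "'a \<Rightarrow> nat \<Rightarrow> nat \<Rightarrow> 'a \<Rightarrow> real" where
  "piece_deriv e 0 j v = pdiff_pow e j \<psi> v"
| "piece_deriv e (Suc k) j v = cutoff_dilate_deriv e (1 / 2 ^ Suc k) j v - cutoff_dilate_deriv e (1 / 2 ^ k) j v"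

lemma piece_deriv_0: "piece_deriv e n 0 = \<phi> n"
  by (cases n) (auto simp: phi_0 phi_Suc cutoff_dilate_deriv_def)

lemma has_vector_derivative_piece_deriv:
  assumes "e \<in> Basis"
  shows "((\<lambda>s. piece_deriv e n j (p + s *\<^sub>R e)) has_vector_derivative
    piece_deriv e n (Suc j) (p + s *\<^sub>R e)) (at s)"
  using has_vector_derivative_pdiff_pow[OF smooth assms]
    has_vector_derivative_diff[OF has_vector_derivative_cutoff_dilate_deriv[OF assms]
      has_vector_derivative_cutoff_dilate_deriv[OF assms]]
  by (cases n) auto

lemma piece_deriv_bound:
  assumes K: "\<And>v. \<bar>pdiff_pow e j \<psi> v\<bar> \<le> K"
  shows "\<bar>piece_deriv e n j v\<bar> \<le> 2 * 2 ^ j * K * (1 / 2 ^ n) ^ j"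
proof -
  have K0: "0 \<le> K" using K[of v] by linarith
  show ?thesis
proof (cases n)
  case 0
  have "(1::real) \<le> 2 * 2 ^ j"
    using one_le_power[of "2::real" j] by linarith
  from mult_right_mono[OF this K0] show ?thesis
    using K[of v] 0 by simp
next
  case (Suc k)
  have dilate: "\<bar>cutoff_dilate_deriv e c j v\<bar> \<le> c ^ j * K" if "0 < c" for c
    using mult_left_mono[OF K[of "c *\<^sub>R v"], of "c ^ j"] that
    by (simp add: cutoff_dilate_deriv_def abs_mult)
  have "\<bar>piece_deriv e n j v\<bar>
      \<le> \<bar>cutoff_dilate_deriv e (1 / 2 ^ Suc k) j v\<bar> + \<bar>cutoff_dilate_deriv e (1 / 2 ^ k) j v\<bar>"
    unfolding Suc piece_deriv.simps by (rule abs_triangle_ineq4)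
  also have "\<dots> \<le> (1 / 2 ^ Suc k) ^ j * K + (1 / 2 ^ k) ^ j * K"
    by (intro add_mono dilate) simp_all
  also have "\<dots> \<le> (1 / 2 ^ k) ^ j * K + (1 / 2 ^ k) ^ j * K"
    using K0 by (intro add_mono mult_right_mono power_mono) (simp_all add: field_simps)
  also have "\<dots> = 2 * 2 ^ j * K * (1 / 2 ^ n) ^ j"
    by (simp add: Suc power_divide)
  finally show ?thesis .
qed
qed

lemma piece_deriv_support:
  assumes "piece_deriv e n j v \<noteq> 0"
  shows "2 ^ n \<le> 2 * jbr v \<and> norm v \<le> 2 ^ Suc n"
proof (cases n)
  case 0
  then show ?thesis
    using assms pdiff_pow_cutoff_outer[of v] jbr_ge_1[of v] by (auto simp: not_less[symmetric])
next
  case (Suc k)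
  have "2 ^ k \<le> norm v"
  proof (rule ccontr)
    assume "\<not> 2 ^ k \<le> norm v"
    moreover have "(2::real) ^ k \<le> 2 ^ Suc k"
      by simp
    ultimately have "norm v < 2 ^ k" "norm v < 2 ^ Suc k"
      by linarith+
    then have "(1 / 2 ^ Suc k) * norm v < 1" "(1 / 2 ^ k) * norm v < 1"
      by (simp_all add: pos_divide_less_eq del: power_Suc)
    then show False using assms Suc cutoff_dilate_deriv_inner by simp
  qed
  moreover have "norm v \<le> 2 ^ Suc n"
  proof (rule ccontr)
    assume "\<not> norm v \<le> 2 ^ Suc n"
    then have big: "2 ^ Suc (Suc k) < norm v"
      using Suc by simp
    moreover have "(0::real) < 2 ^ k"
      by simp
    ultimately have "2 * 2 ^ k < norm v"
      by (simp, linarith)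
    with big have "2 * 2 ^ Suc k < norm v" "2 * 2 ^ k < norm v"
      by simp_all
    then have "2 < (1 / 2 ^ Suc k) * norm v" "2 < (1 / 2 ^ k) * norm v"
      by (simp_all add: pos_less_divide_eq del: power_Suc)
    then show False using assms Suc cutoff_dilate_deriv_outer by simp
  qed
  ultimately show ?thesis
    using Suc jbr_ge_norm[of v] by simp
qed

end

section \<open>Estimates on a dyadic piece\<close>

lemma two_powr_power: "(2 powr a) ^ n = 2 powr (a * real n)"
  by (simp add: powr_realpow[symmetric] powr_powr)

lemma powr_dyadic_window:
  fixes y r :: real
  assumes "2 ^ n \<le> 2 * y" "y \<le> 4 * 2 ^ n"
  shows "y powr r \<le> 4 powr \<bar>r\<bar> * (2 powr r) ^ n"
proof -
  define u where "u = y / 2 ^ n"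
  have y: "y = 2 ^ n * u"
    by (simp add: u_def)
  have u: "1 / 2 \<le> u" "u \<le> 4"
    using assms by (auto simp: u_def field_simps)
  have "u powr r \<le> 4 powr \<bar>r\<bar>"
  proof (cases "r \<ge> 0")
    case True
    then show ?thesis using u powr_mono2[of r u 4] by simp
  next
    case False
    have "u powr r \<le> (1 / 2) powr r"
      using u False by (intro powr_mono2') auto
    also have "\<dots> = 2 powr (- r)"
      by (simp add: powr_divide powr_minus_divide)
    also have "\<dots> \<le> 4 powr (- r)"
      using False by (intro powr_mono2) auto
    finally show ?thesis using False by simp
  qed
  moreover have "(2 ^ n :: real) powr r = (2 powr r) ^ n"
    by (simp add: two_powr_power powr_realpow[symmetric] powr_powr mult.commute)
  ultimately show ?thesis
    unfolding y powr_mult[of "2 ^ n" u r, simplified] by (simp add: mult.commute)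
qed

lemma dyadic_power_decay:
  assumes "0 \<le> \<rho>" "\<rho> \<le> 1"
  shows "(1 / 2 ^ n :: real) ^ k \<le> (2 powr (- \<rho> * real k)) ^ n"
proof -
  have "(1 / 2 ^ n :: real) ^ k = 1 / 2 ^ (n * k)"
    by (simp add: power_mult power_one_over)
  also have "\<dots> = 2 powr (- (real k * real n))"
    by (simp add: powr_minus_divide powr_realpow[symmetric] mult.commute)
  also have "\<dots> \<le> 2 powr (- \<rho> * real k * real n)"
    using mult_right_mono[OF assms(2), of "real k * real n"] by (intro powr_mono) auto
  also have "\<dots> = (2 powr (- \<rho> * real k)) ^ n"
    by (simp add: two_powr_power)
  finally show ?thesis .
qed

definition piece_deriv_const :: "real \<Rightarrow> real \<Rightarrow> (nat \<Rightarrow> real) \<Rightarrow> (nat \<Rightarrow> real) \<Rightarrow> nat \<Rightarrow> real" where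
  "piece_deriv_const m \<rho> CA K M =
    (\<Sum>j\<le>M. real (M choose j) * CA j * 4 powr \<bar>m - \<rho> * real j\<bar> * (2 * 2 ^ (M - j) * K (M - j)))"

lemma piece_deriv_const_nonneg:
  assumes "\<And>j. 0 \<le> CA j" "\<And>j. 0 \<le> K j"
  shows "0 \<le> piece_deriv_const m \<rho> CA K M"
  unfolding piece_deriv_const_def using assms by (intro sum_nonneg) auto

lemma norm_leibniz_sum_le:
  fixes A F :: "nat \<Rightarrow> complex" and v :: "'a::real_normed_vector"
  assumes A: "\<And>j. norm (A j) \<le> CA j * jbr v powr (m - \<rho> * real j)"
    and F: "\<And>j. norm (F j) \<le> 2 * 2 ^ j * K j * (1 / 2 ^ n) ^ j"
    and F_support: "\<And>j. F j \<noteq> 0 \<Longrightarrow> 2 ^ n \<le> 2 * jbr v \<and> norm v \<le> 2 ^ Suc n"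
    and \<rho>: "0 < \<rho>" "\<rho> \<le> 1" and K: "\<And>j. 0 \<le> K j" and CA: "\<And>j. 0 \<le> CA j"
  shows "norm (\<Sum>j\<le>M. of_nat (M choose j) * A j * F (M - j)) \<le>
    (if norm v \<le> 2 ^ Suc n then piece_deriv_const m \<rho> CA K M * (2 powr (m - \<rho> * real M)) ^ n else 0)"
proof (cases "norm v \<le> 2 ^ Suc n")
  case False
  then show ?thesis using F_support by fastforce
next
  case True
  let ?w = "(2 powr (m - \<rho> * real M)) ^ n"
  have "norm (of_nat (M choose j) * A j * F (M - j)) \<le>
      real (M choose j) * CA j * 4 powr \<bar>m - \<rho> * real j\<bar> * (2 * 2 ^ (M - j) * K (M - j)) * ?w"
    if "j \<le> M" for j
  proof (cases "F (M - j) = 0")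
    case True
    then show ?thesis using K CA by simp
  next
    case False
    then have lower: "2 ^ n \<le> 2 * jbr v" and upper: "norm v \<le> 2 * 2 ^ n"
      using F_support by auto
    have "jbr v \<le> 4 * 2 ^ n"
      using jbr_le_1_plus_norm[of v] upper one_le_power[of "2::real" n] by linarith
    from powr_dyadic_window[OF lower this]
    have A': "norm (A j) \<le> CA j * (4 powr \<bar>m - \<rho> * real j\<bar> * (2 powr (m - \<rho> * real j)) ^ n)"
      by (rule order_trans[OF A mult_left_mono[OF _ CA]])
    have "(1 / 2 ^ n) ^ (M - j) \<le> (2 powr (- \<rho> * real (M - j))) ^ n"
      using \<rho> by (intro dyadic_power_decay) auto
    from order_trans[OF F[of "M - j"] mult_left_mono[OF this]]
    have F': "norm (F (M - j)) \<le> 2 * 2 ^ (M - j) * K (M - j) * (2 powr (- \<rho> * real (M - j))) ^ n"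
      using K[of "M - j"] by simp
    have "norm (of_nat (M choose j) * A j * F (M - j))
      \<le> real (M choose j) * (CA j * (4 powr \<bar>m - \<rho> * real j\<bar> * (2 powr (m - \<rho> * real j)) ^ n))
         * (2 * 2 ^ (M - j) * K (M - j) * (2 powr (- \<rho> * real (M - j))) ^ n)"
      unfolding norm_mult using A' F' by (intro mult_mono mult_left_mono) (auto simp: CA K)
    also have "\<dots> = real (M choose j) * CA j * 4 powr \<bar>m - \<rho> * real j\<bar> * (2 * 2 ^ (M - j) * K (M - j))
        * ((2 powr (m - \<rho> * real j)) ^ n * (2 powr (- \<rho> * real (M - j))) ^ n)"
      by (simp only: mult_ac)
    also have "(2 powr (m - \<rho> * real j)) ^ n * (2 powr (- \<rho> * real (M - j))) ^ n = ?w"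
      using that by (simp add: power_mult_distrib[symmetric] powr_add[symmetric] of_nat_diff algebra_simps)
    finally show ?thesis .
  qed
  then have "norm (\<Sum>j\<le>M. of_nat (M choose j) * A j * F (M - j))
      \<le> (\<Sum>j\<le>M. real (M choose j) * CA j * 4 powr \<bar>m - \<rho> * real j\<bar> * (2 * 2 ^ (M - j) * K (M - j)) * ?w)"
    by (intro order_trans[OF norm_sum sum_mono]) auto
  then show ?thesis
    using True by (simp add: piece_deriv_const_def sum_distrib_right)
qed

lemma norm_fdiff_line_le:
  fixes G :: "nat \<Rightarrow> 'a::real_normed_vector \<Rightarrow> complex"
  assumes e: "norm e = 1"
    and deriv: "deriv_seq (\<lambda>i s. G i (p + s *\<^sub>R e))"
    and bound: "\<And>v. norm (G M v) \<le> (if norm v \<le> R then B else 0)" and "0 \<le> B"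
  shows "norm (fdiff M (t *\<^sub>R e) (G 0) p) \<le> \<bar>t\<bar> ^ M * (if norm p \<le> R + real M * \<bar>t\<bar> then B else 0)"
proof -
  have "fdiff M (t *\<^sub>R e) (G 0) p = fdiff M t (\<lambda>s. G 0 (p + s *\<^sub>R e)) 0"
    using fdiff_along_line[of M t e "G 0" p 0] by simp
  also have "norm \<dots> \<le> \<bar>t\<bar> ^ M * (if norm p \<le> R + real M * \<bar>t\<bar> then B else 0)"
  proof (rule norm_fdiff_le[OF deriv], intro ballI)
    fix \<sigma> assume \<sigma>: "\<sigma> \<in> {0..real M}"
    show "norm (G (0 + M) (p + (0 - \<sigma> * t) *\<^sub>R e)) \<le> (if norm p \<le> R + real M * \<bar>t\<bar> then B else 0)"
    proof (cases "norm p \<le> R + real M * \<bar>t\<bar>")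
      case True
      then show ?thesis using bound[of "p + (0 - \<sigma> * t) *\<^sub>R e"] \<open>0 \<le> B\<close> by (auto split: if_splits)
    next
      case False
      have "norm ((0 - \<sigma> * t) *\<^sub>R e) \<le> real M * \<bar>t\<bar>"
        using e \<sigma> by (simp add: abs_mult mult_right_mono)
      moreover have "norm p - norm ((0 - \<sigma> * t) *\<^sub>R e) \<le> norm (p + (0 - \<sigma> * t) *\<^sub>R e)"
        by (metis norm_diff_ineq norm_minus_cancel diff_minus_eq_add)
      ultimately show ?thesis
        using False bound[of "p + (0 - \<sigma> * t) *\<^sub>R e"] by auto
    qed
  qed
  finally show ?thesis .
qed

lemma integrable_indicator_cball:
  "integrable lborel (\<lambda>x::'a::euclidean_space. c * indicator (cball 0 R) x :: real)"
  using emeasure_bounded_finite[of "cball (0::'a) R"] by (intro integrable_mult_right integrable_real_indicator) auto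

lemma norm_integral_cis_le_fdiff:
  fixes G :: "nat \<Rightarrow> 'a::euclidean_space \<Rightarrow> complex"
  assumes cont: "continuous_on UNIV (G 0)"
    and e: "norm e = 1" and half_period: "inner Z (t *\<^sub>R e) = pi"
    and deriv: "\<And>p. deriv_seq (\<lambda>i s. G i (p + s *\<^sub>R e))"
    and bound: "\<And>i v. norm (G i v) \<le> (if norm v \<le> R then B i else 0)" and B: "\<And>i. 0 \<le> B i"
  shows "norm (\<integral>x. G 0 x * cis (inner Z x) \<partial>lborel)
    \<le> (\<bar>t\<bar> / 2) ^ M * B M * measure lborel (cball (0::'a) (R + real M * \<bar>t\<bar>))"
proof -
  let ?R = "R + real M * \<bar>t\<bar>"
  have "(\<lambda>x. G 0 x * cis (inner Z x)) \<in> borel_measurable borel"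
    by (intro borel_measurable_continuous_onI continuous_intros cont)
  moreover have "norm (G 0 x * cis (inner Z x)) \<le> norm (B 0 * indicator (cball 0 R) x)" for x
    using bound[of 0 x] B[of 0] by (auto simp: norm_mult indicator_def)
  ultimately have "integrable lborel (\<lambda>x. G 0 x * cis (inner Z x))"
    by (intro Bochner_Integration.integrable_bound[OF integrable_indicator_cball]) auto
  note fdiff_integral = integral_fdiff_cis[OF this half_period, of M]
  have "2 ^ M * norm (\<integral>x. G 0 x * cis (inner Z x) \<partial>lborel)
      = norm (\<integral>x. fdiff M (t *\<^sub>R e) (G 0) x * cis (inner Z x) \<partial>lborel)"
    using fdiff_integral by (simp add: norm_mult norm_power)
  also have "\<dots> \<le> (\<integral>x. norm (fdiff M (t *\<^sub>R e) (G 0) x * cis (inner Z x)) \<partial>lborel)"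
    by (rule integral_norm_bound)
  also have "\<dots> \<le> (\<integral>x. \<bar>t\<bar> ^ M * B M * indicator (cball 0 ?R) (x::'a) \<partial>lborel)"
  proof (rule Bochner_Integration.integral_mono)
    show "integrable lborel (\<lambda>x. norm (fdiff M (t *\<^sub>R e) (G 0) x * cis (inner Z x)))"
      using fdiff_integral integrable_norm by blast
    show "integrable lborel (\<lambda>x::'a. \<bar>t\<bar> ^ M * B M * indicator (cball 0 ?R) x)"
      by (rule integrable_indicator_cball)
    show "norm (fdiff M (t *\<^sub>R e) (G 0) x * cis (inner Z x)) \<le> \<bar>t\<bar> ^ M * B M * indicator (cball 0 ?R) x" for x
      using norm_fdiff_line_le[OF e deriv bound B, of M t x] by (auto simp: norm_mult indicator_def split: if_splits)
  qed
  also have "\<dots> = \<bar>t\<bar> ^ M * B M * measure lborel (cball (0::'a) ?R)"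
    by simp
  finally show ?thesis
    by (simp add: power_divide field_simps)
qed

section \<open>Decay of the oscillatory integral\<close>

context dyadic_partition
begin

lemma pdiff_pow_cutoff_bounds:
  obtains K where "\<And>e j v. e \<in> Basis \<Longrightarrow> \<bar>pdiff_pow e j \<psi> v\<bar> \<le> K e j"
proof -
  have "\<forall>e j. \<exists>k. e \<in> Basis \<longrightarrow> (\<forall>v. \<bar>pdiff_pow e j \<psi> v\<bar> \<le> k)"
    using pdiff_pow_cutoff_bounded by metis
  then show ?thesis
    using that by metis
qed

lemma continuous_on_phi: "continuous_on UNIV (\<phi> n)"
proof (cases n)
  case 0
  then show ?thesis using smooth_fun_continuous[OF smooth] phi_0 by simp
next
  case (Suc k)
  have "continuous_on UNIV (\<lambda>v. \<psi> ((1 / 2 ^ Suc k) *\<^sub>R v) - \<psi> ((1 / 2 ^ k) *\<^sub>R v))"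
    by (intro continuous_on_diff continuous_on_compose2[OF smooth_fun_continuous[OF smooth]]
        continuous_intros) auto
  then show ?thesis
    using Suc phi_Suc by (simp add: fun_eq_iff[symmetric])
qed

lemma norm_integral_piece_le:
  fixes f :: "'a \<Rightarrow> complex"
  assumes f: "smooth_fun f" and e: "e \<in> Basis"
    and K: "\<And>j v. \<bar>pdiff_pow e j \<psi> v\<bar> \<le> K j"
    and CA: "\<And>j \<Xi>. norm (pdiff_pow e j f \<Xi>) \<le> CA j * jbr \<Xi> powr (m - \<rho> * real j)"
    and CA0: "\<And>j. 0 \<le> CA j" and \<rho>: "0 < \<rho>" "\<rho> \<le> 1"
    and half_period: "inner Z (t *\<^sub>R e) = pi"
  shows "norm (\<integral>\<Xi>. f \<Xi> * of_real (\<phi> n \<Xi>) * cis (inner Z \<Xi>) \<partial>lborel)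
    \<le> (\<bar>t\<bar> / 2) ^ M * (piece_deriv_const m \<rho> CA K M * (2 powr (m - \<rho> * real M)) ^ n)
      * measure lborel (cball (0::'a) (2 ^ Suc n + real M * \<bar>t\<bar>))"
proof -
  have K0: "0 \<le> K j" for j
    using K[of j 0] by linarith
  define G where
    "G i v = (\<Sum>j\<le>i. of_nat (i choose j) * pdiff_pow e j f v * of_real (piece_deriv e n (i - j) v))"
    for i v
  have G0: "G 0 = (\<lambda>\<Xi>. f \<Xi> * of_real (\<phi> n \<Xi>))"
    by (simp add: G_def piece_deriv_0 fun_eq_iff)
  have "norm (\<integral>\<Xi>. G 0 \<Xi> * cis (inner Z \<Xi>) \<partial>lborel)
    \<le> (\<bar>t\<bar> / 2) ^ M * (piece_deriv_const m \<rho> CA K M * (2 powr (m - \<rho> * real M)) ^ n)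
      * measure lborel (cball (0::'a) (2 ^ Suc n + real M * \<bar>t\<bar>))"
  proof (rule norm_integral_cis_le_fdiff[where G = G])
    show "continuous_on UNIV (G 0)"
      unfolding G0 using smooth_fun_continuous[OF f] continuous_on_phi[of n]
      by (intro continuous_intros) (auto intro: continuous_on_compose2[OF continuous_on_of_real])
    show "norm e = 1"
      using e by simp
    show "deriv_seq (\<lambda>i s. G i (p + s *\<^sub>R e))" for p
      unfolding G_def
    proof (rule deriv_seq_leibniz)
      show "deriv_seq (\<lambda>j s. pdiff_pow e j f (p + s *\<^sub>R e))"
        unfolding deriv_seq_def using has_vector_derivative_pdiff_pow[OF f e] by blast
      show "deriv_seq (\<lambda>j s. complex_of_real (piece_deriv e n j (p + s *\<^sub>R e)))"
        unfolding deriv_seq_def using has_vector_derivative_piece_deriv[OF e]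
        by (auto intro!: has_vector_derivative_of_real simp: has_real_derivative_iff_has_vector_derivative)
    qed
    show "norm (G i v) \<le> (if norm v \<le> 2 ^ Suc n then piece_deriv_const m \<rho> CA K i * (2 powr (m - \<rho> * real i)) ^ n else 0)"
      for i v
      unfolding G_def
      using piece_deriv_bound[OF K] piece_deriv_support CA0 K0
      by (intro norm_leibniz_sum_le[OF CA _ _ \<rho>]) auto
    show "0 \<le> piece_deriv_const m \<rho> CA K i * (2 powr (m - \<rho> * real i)) ^ n" for i
      using piece_deriv_const_nonneg[OF CA0 K0] by simp
  qed (rule half_period)
  then show ?thesis
    by (simp add: G0)
qed

end

lemma measure_cball_dyadic_le:
  assumes "0 \<le> c"
  shows "measure lborel (cball (0::'a::euclidean_space) (2 ^ Suc n + c))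
    \<le> unit_ball_vol DIM('a) * (2 ^ DIM('a)) ^ n * (2 + c) ^ DIM('a)"
proof -
  have "2 ^ Suc n + c \<le> 2 ^ n * (2 + c)"
    using mult_right_mono[OF one_le_power[of "2::real" n] assms] by (simp add: algebra_simps)
  then have "(2 ^ Suc n + c) ^ DIM('a) \<le> (2 ^ DIM('a)) ^ n * (2 + c) ^ DIM('a)"
    using assms by (metis (no_types) power_mono power_mult power_mult_distrib mult.commute add_nonneg_nonneg
        zero_le_power zero_le_numeral)
  then show ?thesis
    using assms content_cball[of "2 ^ Suc n + c" "0::'a"] by (simp add: mult_left_mono mult.assoc)
qed

lemma norm_suminf_le_geometric:
  fixes I :: "nat \<Rightarrow> 'a::banach"
  assumes I: "\<And>n. norm (I n) \<le> c * q ^ n" and q: "0 \<le> q" "q < 1"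
  shows "norm (suminf I) \<le> c / (1 - q)"
proof -
  have geometric: "summable (\<lambda>n. c * q ^ n)"
    using q by (intro summable_mult summable_geometric) auto
  have "summable (\<lambda>n. norm (I n))"
    by (rule summable_comparison_test[OF _ geometric]) (use I in auto)
  then have "norm (suminf I) \<le> (\<Sum>n. c * q ^ n)"
    using I geometric by (intro order_trans[OF summable_norm suminf_le]) auto
  also have "\<dots> = c / (1 - q)"
    using q by (simp add: suminf_mult suminf_geometric)
  finally show ?thesis .
qed

context dyadic_partition
begin

lemma norm_osc_int_le:
  fixes f :: "'a \<Rightarrow> complex"
  assumes f: "smooth_fun f" and e: "e \<in> Basis"
    and K: "\<And>j v. \<bar>pdiff_pow e j \<psi> v\<bar> \<le> K j"
    and CA: "\<And>j \<Xi>. norm (pdiff_pow e j f \<Xi>) \<le> CA j * jbr \<Xi> powr (m - \<rho> * real j)"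
    and CA0: "\<And>j. 0 \<le> CA j" and \<rho>: "0 < \<rho>" "\<rho> \<le> 1"
    and M: "m - \<rho> * real M + DIM('a) < 0"
    and half_period: "inner Z (t *\<^sub>R e) = pi"
  shows "norm (osc_int \<phi> f Z) \<le> (\<bar>t\<bar> / 2) ^ M * piece_deriv_const m \<rho> CA K M
    * unit_ball_vol DIM('a) * (2 + real M * \<bar>t\<bar>) ^ DIM('a) / (1 - 2 powr (m - \<rho> * real M + DIM('a)))"
proof -
  let ?q = "2 powr (m - \<rho> * real M + DIM('a))"
  have q: "?q = 2 powr (m - \<rho> * real M) * 2 ^ DIM('a)"
    by (simp add: powr_add powr_realpow)
  have K0: "0 \<le> K j" for j
    using K[of j 0] by linarith
  have B0: "0 \<le> (\<bar>t\<bar> / 2) ^ M * (piece_deriv_const m \<rho> CA K M * (2 powr (m - \<rho> * real M)) ^ n)" for n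
    using piece_deriv_const_nonneg[OF CA0 K0] by simp
  show ?thesis
    unfolding osc_int_def
  proof (rule norm_suminf_le_geometric)
    show "norm (\<integral>\<Xi>. f \<Xi> * of_real (\<phi> n \<Xi>) * cis (inner Z \<Xi>) \<partial>lborel)
      \<le> (\<bar>t\<bar> / 2) ^ M * piece_deriv_const m \<rho> CA K M * unit_ball_vol DIM('a)
          * (2 + real M * \<bar>t\<bar>) ^ DIM('a) * ?q ^ n" for n
      using order_trans[OF norm_integral_piece_le[OF f e K CA CA0 \<rho> half_period]
          mult_left_mono[OF measure_cball_dyadic_le B0]]
      by (simp add: q power_mult_distrib mult_ac)
    show "0 \<le> ?q" "?q < 1"
      using M by (auto intro: powr_less_one)
  qed
qed

end

lemma exists_basis_half_period:
  fixes Z :: "'a::euclidean_space"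
  assumes "Z \<noteq> 0"
  obtains e t where "e \<in> Basis" "inner Z (t *\<^sub>R e) = pi" "\<bar>t\<bar> \<le> pi * DIM('a) / norm Z"
proof -
  let ?max = "Max ((\<lambda>b. \<bar>inner Z b\<bar>) ` Basis)"
  have "?max \<in> (\<lambda>b. \<bar>inner Z b\<bar>) ` Basis"
    by (rule Max_in) auto
  then obtain e where e: "e \<in> Basis" "\<bar>inner Z e\<bar> = ?max"
    by (auto simp del: Max_in)
  have max: "\<bar>inner Z b\<bar> \<le> \<bar>inner Z e\<bar>" if "b \<in> Basis" for b
    unfolding e(2) by (rule Max_ge) (use that in auto)
  have "norm Z \<le> (\<Sum>b\<in>Basis. \<bar>inner Z b\<bar>)"
    by (rule norm_le_l1)
  also have "\<dots> \<le> DIM('a) * \<bar>inner Z e\<bar>"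
    using sum_bounded_above[of Basis "\<lambda>b. \<bar>inner Z b\<bar>"] max by auto
  finally have le: "norm Z \<le> DIM('a) * \<bar>inner Z e\<bar>" .
  then have "inner Z e \<noteq> 0"
    using assms by auto
  show ?thesis
  proof (rule that[OF e(1)])
    show "inner Z ((pi / inner Z e) *\<^sub>R e) = pi"
      using \<open>inner Z e \<noteq> 0\<close> by simp
    show "\<bar>pi / inner Z e\<bar> \<le> pi * DIM('a) / norm Z"
      using le assms \<open>inner Z e \<noteq> 0\<close> by (simp add: field_simps mult_left_mono)
  qed
qed

lemma (in dyadic_partition) norm_osc_int_le_powr:
  fixes f :: "'a \<Rightarrow> complex"
  assumes f: "smooth_fun f" and e: "e \<in> Basis"
    and K: "\<And>j v. \<bar>pdiff_pow e j \<psi> v\<bar> \<le> K j"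
    and CA: "\<And>j \<Xi>. norm (pdiff_pow e j f \<Xi>) \<le> CA j * jbr \<Xi> powr (m - \<rho> * real j)"
    and CA0: "\<And>j. 0 \<le> CA j" and \<rho>: "0 < \<rho>" "\<rho> \<le> 1"
    and M: "m - \<rho> * real M + DIM('a) < 0"
    and half_period: "inner Z (t *\<^sub>R e) = pi"
    and Z: "1 \<le> norm Z" and t: "\<bar>t\<bar> \<le> pi * DIM('a) / norm Z"
  shows "norm (osc_int \<phi> f Z) \<le> (pi * DIM('a) / 2) ^ M * piece_deriv_const m \<rho> CA K M
    * unit_ball_vol DIM('a) * (2 + real M * pi * DIM('a)) ^ DIM('a) / (1 - 2 powr (m - \<rho> * real M + DIM('a)))
    * norm Z powr (- real M)"
proof -
  let ?D = "DIM('a)" and ?q = "2 powr (m - \<rho> * real M + DIM('a))"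
  have q: "?q < 1"
    using M by (auto intro: powr_less_one)
  have K0: "0 \<le> K j" for j
    using K[of j 0] by linarith
  have Z_pos: "0 < norm Z"
    using Z by linarith
  have "pi * ?D / norm Z \<le> pi * ?D / 1"
    using Z by (intro divide_left_mono) auto
  then have t_le: "\<bar>t\<bar> \<le> pi * ?D"
    using t by simp
  have "(\<bar>t\<bar> / 2) ^ M \<le> (pi * ?D / norm Z / 2) ^ M"
    using t by (intro power_mono) auto
  also have "\<dots> = (pi * ?D / 2) ^ M * norm Z powr (- real M)"
    using Z_pos by (simp add: powr_minus_divide powr_realpow power_divide)
  finally have t_pow: "(\<bar>t\<bar> / 2) ^ M \<le> (pi * ?D / 2) ^ M * norm Z powr (- real M)" .
  have "norm (osc_int \<phi> f Z) \<le> (\<bar>t\<bar> / 2) ^ M * piece_deriv_const m \<rho> CA K M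
      * unit_ball_vol ?D * (2 + real M * \<bar>t\<bar>) ^ ?D / (1 - ?q)"
    by (rule norm_osc_int_le[OF f e K CA CA0 \<rho> M half_period])
  also have "\<dots> \<le> ((pi * ?D / 2) ^ M * norm Z powr (- real M)) * piece_deriv_const m \<rho> CA K M
      * unit_ball_vol ?D * (2 + real M * pi * ?D) ^ ?D / (1 - ?q)"
    using t_pow t_le q piece_deriv_const_nonneg[OF CA0 K0]
    by (intro divide_right_mono mult_mono power_mono) (auto simp: mult.assoc intro: mult_left_mono)
  finally show ?thesis
    by (simp add: mult_ac)
qed

lemma (in dyadic_partition) osc_int_decay:
  fixes CA :: "'a \<Rightarrow> nat \<Rightarrow> real"
  assumes CA0: "\<And>e j. 0 \<le> CA e j" and \<rho>: "0 < \<rho>" "\<rho> \<le> 1"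
    and M: "m - \<rho> * real M + DIM('a) < 0"
  obtains C where "0 \<le> C"
    and "\<And>f Z. smooth_fun f \<Longrightarrow>
      (\<And>e j \<Xi>. e \<in> Basis \<Longrightarrow> norm (pdiff_pow e j f \<Xi>) \<le> CA e j * jbr \<Xi> powr (m - \<rho> * real j)) \<Longrightarrow>
      1 \<le> norm Z \<Longrightarrow> norm (osc_int \<phi> f Z) \<le> C * norm Z powr (- real M)"
proof -
  obtain K where K: "\<And>e j v. e \<in> Basis \<Longrightarrow> \<bar>pdiff_pow e j \<psi> v\<bar> \<le> K e j"
    using pdiff_pow_cutoff_bounds by blast
  define Ch where "Ch e = (pi * DIM('a) / 2) ^ M * piece_deriv_const m \<rho> (CA e) (K e) M
    * unit_ball_vol DIM('a) * (2 + real M * pi * DIM('a)) ^ DIM('a) / (1 - 2 powr (m - \<rho> * real M + DIM('a)))"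
    for e
  have Ch0: "0 \<le> Ch e" if "e \<in> Basis" for e
  proof -
    have "0 \<le> K e j" for j
      using K[OF that, of j 0] by linarith
    then show ?thesis
      unfolding Ch_def using M piece_deriv_const_nonneg[OF CA0] by (auto intro!: divide_nonneg_pos powr_less_one)
  qed
  show ?thesis
  proof (rule that)
    show "0 \<le> (\<Sum>e\<in>Basis. Ch e)"
      using Ch0 by (simp add: sum_nonneg)
    fix f :: "'a \<Rightarrow> complex" and Z :: 'a
    assume f: "smooth_fun f"
      and CA: "\<And>e j \<Xi>. e \<in> Basis \<Longrightarrow> norm (pdiff_pow e j f \<Xi>) \<le> CA e j * jbr \<Xi> powr (m - \<rho> * real j)"
      and Z: "1 \<le> norm Z"
    then obtain e t where e: "e \<in> Basis" and "inner Z (t *\<^sub>R e) = pi" "\<bar>t\<bar> \<le> pi * DIM('a) / norm Z"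
      using exists_basis_half_period[of Z] by force
    then have "norm (osc_int \<phi> f Z) \<le> Ch e * norm Z powr (- real M)"
      unfolding Ch_def using norm_osc_int_le_powr[OF f e K[OF e] CA[OF e] CA0 \<rho> M _ Z] by blast
    also have "\<dots> \<le> (\<Sum>e\<in>Basis. Ch e) * norm Z powr (- real M)"
      using Ch0 e by (intro mult_right_mono member_le_sum) auto
    finally show "norm (osc_int \<phi> f Z) \<le> (\<Sum>e\<in>Basis. Ch e) * norm Z powr (- real M)" .
  qed
qed

text \<open>The hypothesis gives, for each \<open>\<Xi>\<close>, a null set depending on \<open>\<Xi>\<close>; closedness in \<open>\<Xi>\<close>
  reduces the uncountably many exceptional sets to those at a countable dense set.\<close>

lemma AE_forall_closed:
  fixes P :: "'x \<Rightarrow> 'i \<Rightarrow> 'a::{topological_space, second_countable_topology} \<Rightarrow> bool"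
  assumes I: "countable I"
    and closed: "\<And>x i. i \<in> I \<Longrightarrow> closed {\<Xi>. P x i \<Xi>}"
    and AE: "\<And>i \<Xi>. i \<in> I \<Longrightarrow> AE x in M. P x i \<Xi>"
  shows "AE x in M. \<forall>i\<in>I. \<forall>\<Xi>. P x i \<Xi>"
proof -
  obtain D :: "'a set" where D: "countable D" "\<And>U. open U \<Longrightarrow> U \<noteq> {} \<Longrightarrow> \<exists>y\<in>D. y \<in> U"
    using countable_dense_exists by blast
  have "AE x in M. \<forall>i\<in>I. \<forall>\<Xi>\<in>D. P x i \<Xi>"
    using AE by (simp add: AE_ball_countable I D(1))
  then show ?thesis
  proof (rule eventually_mono, intro ballI allI)
    fix x i \<Xi>
    assume dense: "\<forall>i\<in>I. \<forall>\<Xi>\<in>D. P x i \<Xi>" and i: "i \<in> I"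
    show "P x i \<Xi>"
    proof (rule ccontr)
      assume "\<not> P x i \<Xi>"
      then obtain y where "y \<in> D" "\<not> P x i y"
        using D(2)[of "- {\<Xi>. P x i \<Xi>}"] closed[OF i, of x] by (auto simp: open_Compl)
      then show False using dense i by blast
    qed
  qed
qed

lemma AE_pdiff_pow_bounds:
  fixes a :: "'x \<Rightarrow> 'a::euclidean_space \<Rightarrow> complex"
  assumes smooth: "\<And>x. smooth_fun (a x)"
    and bound: "\<And>es \<Xi>. set es \<subseteq> Basis \<Longrightarrow>
      AE x in M. norm (iter_pdiff es (a x) \<Xi>) \<le> C es * jbr \<Xi> powr (m - \<rho> * real (length es))"
  shows "AE x in M. \<forall>e\<in>Basis. \<forall>j \<Xi>.
    norm (pdiff_pow e j (a x) \<Xi>) \<le> C (replicate j e) * jbr \<Xi> powr (m - \<rho> * real j)"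
proof -
  have "AE x in M. \<forall>i\<in>UNIV \<times> Basis. \<forall>\<Xi>. norm (pdiff_pow (snd i) (fst i) (a x) \<Xi>)
      \<le> C (replicate (fst i) (snd i)) * jbr \<Xi> powr (m - \<rho> * real (fst i))"
  proof (rule AE_forall_closed)
    show "countable ((UNIV :: nat set) \<times> (Basis :: 'a set))"
      by (rule countable_SIGMA[OF countableI_type]) (simp add: countable_finite)
    show "closed {\<Xi>. norm (pdiff_pow (snd i) (fst i) (a x) \<Xi>)
        \<le> C (replicate (fst i) (snd i)) * jbr \<Xi> powr (m - \<rho> * real (fst i))}"
      if "i \<in> UNIV \<times> Basis" for x i
    proof -
      have "jbr \<Xi> \<noteq> 0" for \<Xi> :: 'a
        using jbr_ge_1[of \<Xi>] by linarith
      then show ?thesis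
        using that by (auto intro!: closed_Collect_le continuous_intros continuous_on_jbr
            smooth_fun_pdiff_pow_continuous[OF smooth])
    qed
    show "AE x in M. norm (pdiff_pow (snd i) (fst i) (a x) \<Xi>)
        \<le> C (replicate (fst i) (snd i)) * jbr \<Xi> powr (m - \<rho> * real (fst i))"
      if "i \<in> UNIV \<times> Basis" for i \<Xi>
    proof -
      have "set (replicate (fst i) (snd i)) \<subseteq> Basis"
        using that by (auto simp: set_replicate_conv_if)
      then show ?thesis
        using bound[of "replicate (fst i) (snd i)" \<Xi>] by simp
    qed
  qed
  then show ?thesis
    by (rule eventually_mono) auto
qed

lemma (in dyadic_partition) AE_osc_int_decay:
  fixes a :: "'x \<Rightarrow> 'a \<Rightarrow> complex"
  assumes smooth: "\<And>x. smooth_fun (a x)"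
    and bound: "\<And>es \<Xi>. set es \<subseteq> Basis \<Longrightarrow>
      AE x in \<mu>. norm (iter_pdiff es (a x) \<Xi>) \<le> Cf es * jbr \<Xi> powr (m - \<rho> * real (length es))"
    and \<rho>: "0 < \<rho>" "\<rho> \<le> 1" and M: "m - \<rho> * real M + DIM('a) < 0"
  obtains C where "0 \<le> C"
    and "AE x in \<mu>. \<forall>Z. 1 \<le> norm Z \<longrightarrow> norm (osc_int \<phi> (a x) Z) \<le> C * norm Z powr (- real M)"
proof -
  obtain C where "0 \<le> C" and C: "\<And>f Z. smooth_fun f \<Longrightarrow>
      (\<And>e j \<Xi>. e \<in> Basis \<Longrightarrow> norm (pdiff_pow e j f \<Xi>) \<le> max 0 (Cf (replicate j e)) * jbr \<Xi> powr (m - \<rho> * real j)) \<Longrightarrow>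
      1 \<le> norm Z \<Longrightarrow> norm (osc_int \<phi> f Z) \<le> C * norm Z powr (- real M)"
    by (rule osc_int_decay[where CA = "\<lambda>e j. max 0 (Cf (replicate j e))", OF _ \<rho> M]) (simp, blast)
  have "AE x in \<mu>. \<forall>e\<in>Basis. \<forall>j \<Xi>.
      norm (pdiff_pow e j (a x) \<Xi>) \<le> Cf (replicate j e) * jbr \<Xi> powr (m - \<rho> * real j)"
    using smooth bound by (rule AE_pdiff_pow_bounds)
  then have "AE x in \<mu>. \<forall>Z. 1 \<le> norm Z \<longrightarrow> norm (osc_int \<phi> (a x) Z) \<le> C * norm Z powr (- real M)"
  proof (rule eventually_mono, intro allI impI)
    fix x and Z :: 'a
    assume bounds: "\<forall>e\<in>Basis. \<forall>j \<Xi>.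
        norm (pdiff_pow e j (a x) \<Xi>) \<le> Cf (replicate j e) * jbr \<Xi> powr (m - \<rho> * real j)"
      and "1 \<le> norm Z"
    have "norm (pdiff_pow e j (a x) \<Xi>) \<le> max 0 (Cf (replicate j e)) * jbr \<Xi> powr (m - \<rho> * real j)"
      if "e \<in> Basis" for e j \<Xi>
      using bounds that by (meson max.cobounded2 mult_right_mono order_trans powr_ge_zero)
    then show "norm (osc_int \<phi> (a x) Z) \<le> C * norm Z powr (- real M)"
      by (rule C[OF smooth _ \<open>1 \<le> norm Z\<close>])
  qed
  with \<open>0 \<le> C\<close> show ?thesis
    by (rule that)
qed

lemma powr_le_prod_powr:
  fixes z N :: "'j \<Rightarrow> real"
  assumes "1 \<le> r" "\<And>j. j \<in> S \<Longrightarrow> 1 \<le> z j \<and> z j \<le> r" "\<And>j. j \<in> S \<Longrightarrow> 0 \<le> N j"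
    "(\<Sum>j\<in>S. N j) \<le> real M"
  shows "r powr (- real M) \<le> (\<Prod>j\<in>S. z j powr (- N j))"
proof -
  have "r powr (- real M) \<le> r powr (\<Sum>j\<in>S. - N j)"
    using assms(1,4) by (intro powr_mono) (auto simp: sum_negf)
  also have "\<dots> = (\<Prod>j\<in>S. r powr (- N j))"
    using assms(1) by (intro powr_sum) auto
  also have "\<dots> \<le> (\<Prod>j\<in>S. z j powr (- N j))"
  proof (rule prod_mono)
    fix j assume "j \<in> S"
    then show "0 \<le> r powr - N j \<and> r powr - N j \<le> z j powr - N j"
      using assms(2,3)[of j] by (auto intro: powr_mono2')
  qed
  finally show ?thesis .
qed

lemma large_components_powr_le:
  fixes Z :: "'b::real_normed_vector ^ 'N"
  assumes S: "{j. 1 \<le> norm (Z $ j)} = S" "S \<noteq> {}"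
    and N: "\<forall>j\<in>S. 0 \<le> N j" "(\<Sum>j\<in>S. N j) \<le> real M"
  shows "1 \<le> norm Z" and "norm Z powr (- real M) \<le> (\<Prod>j\<in>S. norm (Z $ j) powr (- N j))"
proof -
  have components: "1 \<le> norm (Z $ j) \<and> norm (Z $ j) \<le> norm Z" if "j \<in> S" for j
    using that S(1) Finite_Cartesian_Product.norm_nth_le[of Z j] by auto
  then show "1 \<le> norm Z"
    using S(2) by force
  then show "norm Z powr (- real M) \<le> (\<Prod>j\<in>S. norm (Z $ j) powr (- N j))"
    using components N by (intro powr_le_prod_powr) auto
qed

theorem lemma3p1:
  fixes m \<rho> :: real
    and a :: "real^'n \<Rightarrow> real^'n^'N \<Rightarrow> complex"
    and \<phi> :: "nat \<Rightarrow> real^'n^'N \<Rightarrow> real"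
    and S :: "'N set"
    and Nj :: "'N \<Rightarrow> real"
  assumes "0 < \<rho>" and "\<rho> \<le> 1"
    and "LinfS m \<rho> a"
    and "lp_partition \<phi>"
    and "S \<noteq> {}"
    and "\<forall>j\<in>S. Nj j \<ge> 0"
  shows "\<exists>C. AE x in lborel. \<forall>Z::real^'n^'N. {j. norm (Z $ j) \<ge> 1} = S \<longrightarrow>
           norm (osc_int \<phi> (a x) Z) \<le> C * (\<Prod>j\<in>S. norm (Z $ j) powr (- Nj j))"
proof -
  obtain Cf where smooth: "\<And>x. smooth_fun (a x)"
    and Cf: "\<And>es \<Xi>. set es \<subseteq> Basis \<Longrightarrow>
      AE x in lborel. norm (iter_pdiff es (a x) \<Xi>) \<le> Cf es * jbr \<Xi> powr (m - \<rho> * real (length es))"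
    using \<open>LinfS m \<rho> a\<close> unfolding LinfS_def by metis
  obtain \<psi> where "dyadic_partition \<psi> \<phi>"
    using \<open>lp_partition \<phi>\<close> by (rule lp_partition_imp_dyadic_partition)
  obtain M :: nat where M: "max (\<Sum>j\<in>S. Nj j) ((m + DIM(real^'n^'N)) / \<rho>) < M"
    using reals_Archimedean2 by blast
  then have "m - \<rho> * real M + DIM(real^'n^'N) < 0"
    using \<open>0 < \<rho>\<close> by (simp add: divide_less_eq algebra_simps)
  then obtain C where "0 \<le> C" and decay:
      "AE x in lborel. \<forall>Z. 1 \<le> norm Z \<longrightarrow> norm (osc_int \<phi> (a x) Z) \<le> C * norm Z powr (- real M)"
    using dyadic_partition.AE_osc_int_decay[OF \<open>dyadic_partition \<psi> \<phi>\<close> smooth Cf assms(1,2)] by blast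
  have "AE x in lborel. \<forall>Z::real^'n^'N. {j. norm (Z $ j) \<ge> 1} = S \<longrightarrow>
      norm (osc_int \<phi> (a x) Z) \<le> C * (\<Prod>j\<in>S. norm (Z $ j) powr (- Nj j))"
  proof (rule eventually_mono[OF decay], intro allI impI)
    fix x and Z :: "real^'n^'N"
    assume decay_x: "\<forall>Z. 1 \<le> norm Z \<longrightarrow> norm (osc_int \<phi> (a x) Z) \<le> C * norm Z powr (- real M)"
      and S: "{j. norm (Z $ j) \<ge> 1} = S"
    have "(\<Sum>j\<in>S. Nj j) \<le> real M"
      using M by linarith
    note Z = large_components_powr_le[OF S \<open>S \<noteq> {}\<close> assms(6) this]
    show "norm (osc_int \<phi> (a x) Z) \<le> C * (\<Prod>j\<in>S. norm (Z $ j) powr (- Nj j))"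
      using decay_x Z mult_left_mono[OF Z(2) \<open>0 \<le> C\<close>] by (meson order_trans)
  qed
  then show ?thesis by blast
qed

end
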